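(* Consider the remote-estimation MDP described in the context, assume $\rho^2(\mathbf{A})(1-\theta_{\max})<1$, and let $V$ be the relative value function obtained as the limit of relative value iteration (defined in the context) started from a function $V^0$ that is non-decreasing in $\delta$ and in $\tau$ (e.g. $V^0\equiv0$). Then: (i) for every $\tau\in\mathbb{N}^+$, $\delta\mapsto V(\tau,\delta)$ is non-decreasing; (ii) for every $\delta\in\mathbb{N}^+$, $\tau\mapsto V(\tau,\delta)$ is non-decreasing.
   Context: Linear Gaussian process $\mathbf{x}_{k+1}=\mathbf{A}\mathbf{x}_k+\mathbf{w}_k$, $\mathbf{w}_k$ i.i.d. $\mathcal{N}(0,\mathbf{Q})$, $\mathbf{Q}\succeq 0$; measurements $\mathbf{y}_k=\mathbf{C}\mathbf{x}_k+\mathbf{v}_k$, $\mathbf{v}_k$ i.i.d. $\mathcal{N}(0,\mathbf{R})$, $\mathbf{R}\succ0$; $(\mathbf{A},\mathbf{C})$ observable, $(\mathbf{A},\sqrt{\mathbf{Q}})$ controllable; $\bar{\mathbf{P}}$ the steady-state a posteriori Kalman error covariance; $\rho(\cdot)$ spectral radius. $f(\delta)=\mathrm{tr}\big(\mathbf{A}^{\delta}\bar{\mathbf{P}}(\mathbf{A}^T)^{\delta}+\sum_{r=0}^{\delta-1}\mathbf{A}^r\mathbf{Q}(\mathbf{A}^T)^r\big)$, which is non-decreasing in $\delta$. $\theta:\mathbb{N}^+\to[\theta_{\min},\theta_{\max}]\subseteq[0,1]$ non-increasing; $\bar\theta=1-\theta$; integers $\tau_D>1$, $\delta_R>1$. MDP: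 states $s=(\tau,\delta)\in\mathcal{S}=\mathbb{N}^+\times\mathbb{N}^+$, actions $\mathcal{U}=\{0,1,2\}$. Transitions $P_{s,s'}(u)$ from $(\tau,\delta)$: $u=0$: to $(\tau+1,\delta+1)$ w.p. 1; $u=1$: to $(\tau+\tau_D,1)$ w.p. $\theta(\tau)$, to $(\tau+\tau_D,\delta+1)$ w.p. $\bar\theta(\tau)$; $u=2$: to $(1,\delta+\delta_R)$ w.p. 1. Cost $c(s,u)=f(\delta)$ for $u\in\{0,1\}$, $c(s,2)=\sum_{r=0}^{\delta_R-1}f(\delta+r)$. Relative value iteration: fix a reference state $s_{\mathrm{ref}}$; for $n\ge1$, $Q^n(s,u)=c(s,u)+\sum_{s'}P_{s,s'}(u)V^{n-1}(s')$, $\tilde V^n(s)=\min_{u\in\mathcal{U}}Q^n(s,u)$, $V^n(s)=\tilde V^n(s)-\tilde V^n(s_{\mathrm{ref}})$; $V=\lim_n V^n$, which solves the average-cost Bellman equation $\lambda^*+V(s)=\min_u[c(s,u)+\sum_{s'}P_{s,s'}(u)V(s')]$. *)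

theory Defs
  imports "HOL-Analysis.Analysis"
begin

text \<open>Matrix power with respect to matrix multiplication (the type class power on vec is componentwise).\<close>
primrec mpow :: "real^'n^'n \<Rightarrow> nat \<Rightarrow> real^'n^'n" where
  "mpow M 0 = mat 1"
| "mpow M (Suc k) = M ** mpow M k"

definition psd :: "real^'n^'n \<Rightarrow> bool" where
  "psd M \<longleftrightarrow> transpose M = M \<and> (\<forall>x. 0 \<le> x \<bullet> (M *v x))"

definition pd :: "real^'n^'n \<Rightarrow> bool" where
  "pd M \<longleftrightarrow> transpose M = M \<and> (\<forall>x. x \<noteq> 0 \<longrightarrow> 0 < x \<bullet> (M *v x))"

definition complexify :: "real^'n^'n \<Rightarrow> complex^'n^'n" where
  "complexify M = (\<chi> i j. complex_of_real (M $ i $ j))"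

definition spectral_radius :: "real^'n^'n \<Rightarrow> real" where
  "spectral_radius M = Max (cmod ` {l. det (mat l - complexify M) = 0})"

text \<open>Observability of (A,C): the observability matrix [C; CA; ...; CA^(n-1)] has full column
  rank n, i.e. trivial kernel.\<close>
definition observable :: "real^'n^'n \<Rightarrow> real^'n^'m \<Rightarrow> bool" where
  "observable A C \<longleftrightarrow>
     (\<forall>x. (\<forall>k<CARD('n). C *v (mpow A k *v x) = 0) \<longrightarrow> x = 0)"

text \<open>Controllability of (A,B): the controllability matrix [B, AB, ..., A^(n-1)B] has full row
  rank n, i.e. its transpose has trivial kernel.\<close>
definition controllable :: "real^'n^'n \<Rightarrow> real^'k^'n \<Rightarrow> bool" where
  "controllable A B \<longleftrightarrow>
     (\<forall>y. (\<forall>k<CARD('n). y v* (mpow A k ** B) = 0) \<longrightarrow> y = 0)"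

text \<open>P is a steady-state a posteriori Kalman error covariance: a fixed point of the
  Kalman filter covariance recursion (prediction followed by measurement update).\<close>
definition kalman_prior :: "real^'n^'n \<Rightarrow> real^'n^'n \<Rightarrow> real^'n^'n \<Rightarrow> real^'n^'n" where
  "kalman_prior A Q P = A ** P ** transpose A + Q"

definition kalman_update ::
  "real^'n^'n \<Rightarrow> real^'n^'m \<Rightarrow> real^'n^'n \<Rightarrow> real^'m^'m \<Rightarrow> real^'n^'n \<Rightarrow> real^'n^'n" where
  "kalman_update A C Q R P =
     (let Pm = kalman_prior A Q P
      in Pm - Pm ** transpose C ** matrix_inv (C ** Pm ** transpose C + R) ** C ** Pm)"

definition steady_state_posterior ::
  "real^'n^'n \<Rightarrow> real^'n^'m \<Rightarrow> real^'n^'n \<Rightarrow> real^'m^'m \<Rightarrow> real^'n^'n \<Rightarrow> bool" where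
  "steady_state_posterior A C Q R P \<longleftrightarrow> psd P \<and> kalman_update A C Q R P = P"

definition ferr :: "real^'n^'n \<Rightarrow> real^'n^'n \<Rightarrow> real^'n^'n \<Rightarrow> nat \<Rightarrow> real" where
  "ferr A Pbar Q d = trace (mpow A d ** Pbar ** mpow (transpose A) d
      + (\<Sum>r<d. mpow A r ** Q ** mpow (transpose A) r))"

text \<open>States are pairs (tau, delta) of positive naturals; actions 0,1,2.\<close>
definition cost :: "(nat \<Rightarrow> real) \<Rightarrow> nat \<Rightarrow> nat \<times> nat \<Rightarrow> nat \<Rightarrow> real" where
  "cost f dR s u = (if u = 2 then (\<Sum>r<dR. f (snd s + r)) else f (snd s))"

definition trans :: "(nat \<Rightarrow> real) \<Rightarrow> nat \<Rightarrow> nat \<Rightarrow> nat \<times> nat \<Rightarrow> nat \<Rightarrow> nat \<times> nat \<Rightarrow> real" where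
  "trans \<theta> tD dR s u s' = (case s of (\<tau>, \<delta>) \<Rightarrow>
     if u = 0 then (if s' = (\<tau> + 1, \<delta> + 1) then 1 else 0)
     else if u = 1 then (if s' = (\<tau> + tD, 1) then \<theta> \<tau> else 0)
                      + (if s' = (\<tau> + tD, \<delta> + 1) then 1 - \<theta> \<tau> else 0)
     else if u = 2 then (if s' = (1, \<delta> + dR) then 1 else 0)
     else 0)"

definition succs :: "nat \<Rightarrow> nat \<Rightarrow> nat \<times> nat \<Rightarrow> nat \<Rightarrow> (nat \<times> nat) set" where
  "succs tD dR s u = (case s of (\<tau>, \<delta>) \<Rightarrow>
     if u = 0 then {(\<tau> + 1, \<delta> + 1)}
     else if u = 1 then {(\<tau> + tD, 1), (\<tau> + tD, \<delta> + 1)}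
     else {(1, \<delta> + dR)})"

definition Qfun ::
  "(nat \<Rightarrow> real) \<Rightarrow> (nat \<Rightarrow> real) \<Rightarrow> nat \<Rightarrow> nat \<Rightarrow> (nat \<times> nat \<Rightarrow> real) \<Rightarrow> nat \<times> nat \<Rightarrow> nat \<Rightarrow> real" where
  "Qfun f \<theta> tD dR V s u = cost f dR s u + (\<Sum>s'\<in>succs tD dR s u. trans \<theta> tD dR s u s' * V s')"

primrec rvi ::
  "(nat \<Rightarrow> real) \<Rightarrow> (nat \<Rightarrow> real) \<Rightarrow> nat \<Rightarrow> nat \<Rightarrow> nat \<times> nat \<Rightarrow> (nat \<times> nat \<Rightarrow> real)
   \<Rightarrow> nat \<Rightarrow> nat \<times> nat \<Rightarrow> real" where
  "rvi f \<theta> tD dR sref V0 0 = V0"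
| "rvi f \<theta> tD dR sref V0 (Suc n) =
     (let Vt = (\<lambda>s. Min ((Qfun f \<theta> tD dR (rvi f \<theta> tD dR sref V0 n) s) ` {0, 1, 2}))
      in (\<lambda>s. Vt s - Vt sref))"

end

theory Submission
  imports Defs
begin

text \<open>The error cost \<open>f\<close> is non-decreasing because the fixed point \<open>P\<close> of the Kalman recursion
  lies below its own prediction \<open>A P A\<^sup>T + Q\<close>; hence \<open>f(\<delta>+1) - f(\<delta>)\<close> is the trace of the
  congruence of the positive semidefinite matrix \<open>A P A\<^sup>T + Q - P\<close> by \<open>A\<^sup>\<delta>\<close>. The Bellman operator then preserves
  monotonicity in both coordinates: in \<open>\<delta>\<close> since costs and successor states all move upwards
  with \<open>\<delta>\<close>, in \<open>\<tau>\<close> since a larger \<open>\<tau>\<close> moves successors upwards and, \<open>\<theta>\<close> being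
  non-increasing, shifts probability from the reset successor \<open>(\<tau>+\<tau>\<^sub>D, 1)\<close> to the larger value
  at \<open>(\<tau>+\<tau>\<^sub>D, \<delta>+1)\<close>. Subtracting the constant value at the reference state preserves
  monotonicity, so every iterate is monotone, and so is the pointwise limit.\<close>

lemma nonneg_quadratic_congruence:
  assumes "\<forall>y. 0 \<le> y \<bullet> ((N::real^'k^'k) *v y)"
  shows "0 \<le> (x::real^'n) \<bullet> (((M::real^'k^'n) ** N ** transpose M) *v x)"
proof -
  have "x \<bullet> ((M ** N ** transpose M) *v x) = (transpose M *v x) \<bullet> (N *v (transpose M *v x))"
    by (simp flip: dot_lmul_matrix matrix_vector_mul_assoc)
  thus ?thesis using assms by simp
qed

lemma trace_nonneg_if_nonneg_quadratic:
  assumes "\<forall>y. 0 \<le> y \<bullet> ((X::real^'n^'n) *v y)"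
  shows "0 \<le> trace X"
proof -
  have axis_inner: "axis i 1 \<bullet> v = v $ i" for i and v :: "real^'n"
    by (simp add: cart_eq_inner_axis inner_commute)
  have "X $ i $ i = axis i 1 \<bullet> (X *v axis i 1)" for i
    by (simp add: axis_inner matrix_vector_mult_basis column_def)
  hence "trace X = (\<Sum>i\<in>UNIV. axis i 1 \<bullet> (X *v axis i 1))" by (simp add: trace_def)
  also have "\<dots> \<ge> 0" using assms by (intro sum_nonneg) auto
  finally show ?thesis .
qed

lemma mpow_Suc_right: "mpow M (Suc k) = mpow M k ** M"
  by (induction k) (simp_all add: matrix_mul_assoc)

lemma mpow_transpose: "mpow (transpose M) k = transpose (mpow M k)"
proof (induction k)
  case (Suc k)
  have "mpow (transpose M) (Suc k) = mpow (transpose M) k ** transpose M" by (rule mpow_Suc_right)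
  also have "\<dots> = transpose (M ** mpow M k)" using Suc by (simp add: matrix_transpose_mul)
  finally show ?case by simp
qed (simp add: transpose_mat)

lemma matrix_add_rdistrib: "(B + C) ** (A::real^'a^'b) = B ** A + C ** A"
  by (vector matrix_matrix_mult_def sum.distrib[symmetric] field_simps)

lemma transpose_add: "transpose ((X::real^'a^'b) + Y) = transpose X + transpose Y"
  by (vector transpose_def)

lemma matrix_inv_invertible:
  assumes "invertible (S::real^'m^'m)"
  shows "S ** matrix_inv S = mat 1" "matrix_inv S ** S = mat 1"
  using someI_ex[OF assms[unfolded invertible_def]] unfolding matrix_inv_def by auto

lemma invertible_if_dominates_pd:
  assumes "pd R" and "\<And>w. w \<bullet> (R *v w) \<le> w \<bullet> (S *v w)"
  shows "invertible S"
proof -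
  have "\<forall>w. S *v w = 0 \<longrightarrow> w = 0"
  proof (intro allI impI)
    fix w assume "S *v w = 0"
    hence "w \<bullet> (R *v w) \<le> 0" using assms(2)[of w] by simp
    thus "w = 0" using assms(1) unfolding pd_def by (meson not_le)
  qed
  thus ?thesis using matrix_left_invertible_ker invertible_left_inverse by blast
qed

lemma matrix_inv_nonneg_if_dominates_pd:
  assumes R: "pd R" and dom: "\<And>w. w \<bullet> (R *v w) \<le> w \<bullet> (S *v w)"
  shows "0 \<le> z \<bullet> (matrix_inv S *v z)"
proof -
  define w where "w = matrix_inv S *v z"
  have "S *v w = z"
    using matrix_inv_invertible(1)[OF invertible_if_dominates_pd[OF assms]]
    by (simp add: w_def matrix_vector_mul_assoc)
  hence "z \<bullet> (matrix_inv S *v z) = w \<bullet> (S *v w)" by (simp add: w_def inner_commute)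
  moreover have "0 \<le> w \<bullet> (R *v w)" using R unfolding pd_def by (cases "w = 0") (auto intro: less_imp_le)
  ultimately show ?thesis using dom[of w] by linarith
qed

lemma kalman_prior_nonneg:
  assumes "psd P" and "psd Q"
  shows "0 \<le> x \<bullet> (kalman_prior A Q P *v x)"
proof -
  have "0 \<le> x \<bullet> ((A ** P ** transpose A) *v x)"
    using assms(1) by (intro nonneg_quadratic_congruence) (auto simp: psd_def)
  moreover have "0 \<le> x \<bullet> (Q *v x)" using assms(2) by (auto simp: psd_def)
  ultimately show ?thesis
    by (simp add: kalman_prior_def matrix_vector_mult_add_rdistrib inner_add_right)
qed

lemma kalman_fixpoint_le_prior:
  fixes A P Q :: "real^'n^'n" and C :: "real^'n^'m" and R :: "real^'m^'m"
  assumes P: "psd P" and Q: "psd Q" and R: "pd R" and fixpoint: "kalman_update A C Q R P = P"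
  shows "y \<bullet> (P *v y) \<le> y \<bullet> (kalman_prior A Q P *v y)"
proof -
  define Pm where "Pm = kalman_prior A Q P"
  define S where "S = C ** Pm ** transpose C + R"
  define K where "K = Pm ** transpose C ** matrix_inv S ** C ** Pm"
  have P_eq: "P = Pm - K"
    using fixpoint unfolding kalman_update_def Let_def Pm_def S_def K_def by simp
  have "transpose P = P" "transpose Q = Q" using P Q by (auto simp: psd_def)
  hence Pm_sym: "transpose Pm = Pm" unfolding Pm_def kalman_prior_def
    by (simp add: transpose_add matrix_transpose_mul matrix_mul_assoc)
  have S_dom: "w \<bullet> (R *v w) \<le> w \<bullet> (S *v w)" for w
  proof -
    have "0 \<le> w \<bullet> ((C ** Pm ** transpose C) *v w)"
      using kalman_prior_nonneg[OF P Q] by (intro nonneg_quadratic_congruence) (auto simp: Pm_def)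
    thus ?thesis unfolding S_def by (simp add: matrix_vector_mult_add_rdistrib inner_add_right)
  qed
  have "K = (Pm ** transpose C) ** matrix_inv S ** transpose (Pm ** transpose C)"
    unfolding K_def by (simp add: matrix_transpose_mul Pm_sym matrix_mul_assoc)
  hence "0 \<le> y \<bullet> (K *v y)"
    using matrix_inv_nonneg_if_dominates_pd[OF R S_dom] nonneg_quadratic_congruence by metis
  moreover have "P *v y = Pm *v y - K *v y"
    using P_eq by (simp add: matrix_vector_mult_diff_rdistrib)
  ultimately show ?thesis unfolding Pm_def by (simp add: inner_diff_right)
qed

lemma ferr_le_Suc:
  fixes A P Q :: "real^'n^'n" and C :: "real^'n^'m" and R :: "real^'m^'m"
  assumes "psd P" "psd Q" "pd R" "kalman_update A C Q R P = P"
  shows "ferr A P Q d \<le> ferr A P Q (Suc d)"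
proof -
  define M where "M = mpow A d"
  define X where "X = (\<Sum>r<d. mpow A r ** Q ** mpow (transpose A) r)"
  define Pm where "Pm = kalman_prior A Q P"
  have "ferr A P Q d = trace (M ** P ** transpose M) + trace X"
    unfolding ferr_def M_def X_def by (simp add: trace_add mpow_transpose)
  moreover have "ferr A P Q (Suc d) = trace (M ** Pm ** transpose M) + trace X"
  proof -
    have "ferr A P Q (Suc d) = trace (M ** A ** P ** transpose (M ** A) + (X + M ** Q ** transpose M))"
      unfolding ferr_def M_def X_def mpow_transpose unfolding mpow_Suc_right by (simp add: add.commute)
    thus ?thesis unfolding Pm_def kalman_prior_def
      by (simp add: trace_add matrix_add_ldistrib matrix_add_rdistrib matrix_mul_assoc
          matrix_transpose_mul)
  qed
  moreover have "0 \<le> trace (M ** Pm ** transpose M - M ** P ** transpose M)"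
  proof (rule trace_nonneg_if_nonneg_quadratic, rule allI)
    fix x :: "real^'n"
    have "x \<bullet> ((M ** Pm ** transpose M - M ** P ** transpose M) *v x)
       = (transpose M *v x) \<bullet> (Pm *v (transpose M *v x)) - (transpose M *v x) \<bullet> (P *v (transpose M *v x))"
      by (simp add: matrix_vector_mult_diff_rdistrib inner_diff_right
          flip: dot_lmul_matrix matrix_vector_mul_assoc)
    thus "0 \<le> x \<bullet> ((M ** Pm ** transpose M - M ** P ** transpose M) *v x)"
      using kalman_fixpoint_le_prior[OF assms, of "transpose M *v x"] by (simp add: Pm_def)
  qed
  ultimately show ?thesis by (simp add: trace_sub)
qed

lemma ferr_mono:
  fixes A P Q :: "real^'n^'n" and C :: "real^'n^'m" and R :: "real^'m^'m"
  assumes "psd P" "psd Q" "pd R" "kalman_update A C Q R P = P"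
  shows "mono (ferr A P Q)"
  using ferr_le_Suc[OF assms] by (rule mono_iff_le_Suc[THEN iffD2, rule_format])

definition mono_delta :: "(nat \<times> nat \<Rightarrow> real) \<Rightarrow> bool" where
  "mono_delta W \<longleftrightarrow> (\<forall>\<tau> \<delta> \<delta>'. 1 \<le> \<tau> \<longrightarrow> 1 \<le> \<delta> \<longrightarrow> \<delta> \<le> \<delta>' \<longrightarrow> W (\<tau>, \<delta>) \<le> W (\<tau>, \<delta>'))"

definition mono_tau :: "(nat \<times> nat \<Rightarrow> real) \<Rightarrow> bool" where
  "mono_tau W \<longleftrightarrow> (\<forall>\<tau> \<tau>' \<delta>. 1 \<le> \<tau> \<longrightarrow> \<tau> \<le> \<tau>' \<longrightarrow> 1 \<le> \<delta> \<longrightarrow> W (\<tau>, \<delta>) \<le> W (\<tau>', \<delta>))"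

lemma mono_delta_diff_const: "mono_delta W \<Longrightarrow> mono_delta (\<lambda>s. W s - c)"
  by (simp add: mono_delta_def)

lemma mono_tau_diff_const: "mono_tau W \<Longrightarrow> mono_tau (\<lambda>s. W s - c)"
  by (simp add: mono_tau_def)

definition bellman ::
  "(nat \<Rightarrow> real) \<Rightarrow> (nat \<Rightarrow> real) \<Rightarrow> nat \<Rightarrow> nat \<Rightarrow> (nat \<times> nat \<Rightarrow> real) \<Rightarrow> nat \<times> nat \<Rightarrow> real" where
  "bellman f \<theta> tD dR W s = Min (Qfun f \<theta> tD dR W s ` {0, 1, 2})"

lemma rvi_Suc_bellman:
  "rvi f \<theta> tD dR sref V0 (Suc n) =
     (\<lambda>s. bellman f \<theta> tD dR (rvi f \<theta> tD dR sref V0 n) s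
          - bellman f \<theta> tD dR (rvi f \<theta> tD dR sref V0 n) sref)"
  by (simp add: bellman_def Let_def)

lemma Min_image_mono:
  assumes "finite U" "U \<noteq> {}" "\<And>u. u \<in> U \<Longrightarrow> (g u :: 'a::linorder) \<le> h u"
  shows "Min (g ` U) \<le> Min (h ` U)"
proof -
  have "Min (h ` U) \<in> h ` U" using assms(1,2) by simp
  then obtain u where "u \<in> U" "Min (h ` U) = h u" by blast
  thus ?thesis using assms by (metis Min_le finite_imageI image_eqI order_trans)
qed

lemma bellman_mono_pointwise:
  assumes "Qfun f \<theta> tD dR W s 0 \<le> Qfun f \<theta> tD dR W s' 0"
    and "Qfun f \<theta> tD dR W s 1 \<le> Qfun f \<theta> tD dR W s' 1"
    and "Qfun f \<theta> tD dR W s 2 \<le> Qfun f \<theta> tD dR W s' 2"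
  shows "bellman f \<theta> tD dR W s \<le> bellman f \<theta> tD dR W s'"
  unfolding bellman_def using assms by (intro Min_image_mono) auto

lemma Qfun_0: "Qfun f \<theta> tD dR W (\<tau>, \<delta>) 0 = f \<delta> + W (\<tau> + 1, \<delta> + 1)"
  by (simp add: Qfun_def cost_def succs_def trans_def)

lemma Qfun_1:
  "1 \<le> \<delta> \<Longrightarrow> Qfun f \<theta> tD dR W (\<tau>, \<delta>) 1
     = f \<delta> + (\<theta> \<tau> * W (\<tau> + tD, 1) + (1 - \<theta> \<tau>) * W (\<tau> + tD, \<delta> + 1))"
  by (simp add: Qfun_def cost_def succs_def trans_def)

lemma Qfun_2: "Qfun f \<theta> tD dR W (\<tau>, \<delta>) 2 = (\<Sum>r<dR. f (\<delta> + r)) + W (1, \<delta> + dR)"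
  by (simp add: Qfun_def cost_def succs_def trans_def)

lemma bellman_mono_delta:
  assumes f: "mono f" and \<theta>: "\<And>\<tau>. 1 \<le> \<tau> \<Longrightarrow> 0 \<le> \<theta> \<tau> \<and> \<theta> \<tau> \<le> 1"
    and W: "mono_delta W"
  shows "mono_delta (bellman f \<theta> tD dR W)"
  unfolding mono_delta_def
proof (intro allI impI bellman_mono_pointwise)
  fix \<tau> \<delta> \<delta>' :: nat assume h: "1 \<le> \<tau>" "1 \<le> \<delta>" "\<delta> \<le> \<delta>'"
  have W_le: "W (t, a) \<le> W (t, b)" if "1 \<le> t" "1 \<le> a" "a \<le> b" for t a b
    using W that unfolding mono_delta_def by blast
  have f_le: "f a \<le> f b" if "a \<le> b" for a b using f that by (rule monoD)
  show "Qfun f \<theta> tD dR W (\<tau>, \<delta>) 0 \<le> Qfun f \<theta> tD dR W (\<tau>, \<delta>') 0"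
    unfolding Qfun_0 using h by (intro add_mono f_le W_le) auto
  have "(1 - \<theta> \<tau>) * W (\<tau> + tD, \<delta> + 1) \<le> (1 - \<theta> \<tau>) * W (\<tau> + tD, \<delta>' + 1)"
    using \<theta> h by (intro mult_left_mono W_le) auto
  then show "Qfun f \<theta> tD dR W (\<tau>, \<delta>) 1 \<le> Qfun f \<theta> tD dR W (\<tau>, \<delta>') 1"
    unfolding Qfun_1[OF h(2)] Qfun_1[OF order_trans[OF h(2,3)]] using f_le[OF h(3)] by simp
  show "Qfun f \<theta> tD dR W (\<tau>, \<delta>) 2 \<le> Qfun f \<theta> tD dR W (\<tau>, \<delta>') 2"
    unfolding Qfun_2 using h by (intro add_mono sum_mono f_le W_le) auto
qed

lemma convex_combination_mono:
  fixes t t' x y x' y' :: real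
  assumes "0 \<le> t" "t \<le> 1" "t' \<le> t" "x \<le> x'" "y \<le> y'" "x' \<le> y'"
  shows "t * x + (1 - t) * y \<le> t' * x' + (1 - t') * y'"
proof -
  have "t * x \<le> t * x'" "(1 - t) * y \<le> (1 - t) * y'"
    using assms by (auto intro: mult_left_mono)
  moreover have "(t - t') * (x' - y') \<le> 0" using assms by (intro mult_nonneg_nonpos) auto
  ultimately show ?thesis by (simp add: algebra_simps)
qed

lemma bellman_mono_tau:
  assumes \<theta>: "\<And>\<tau>. 1 \<le> \<tau> \<Longrightarrow> 0 \<le> \<theta> \<tau> \<and> \<theta> \<tau> \<le> 1"
    and \<theta>_antimono: "\<And>\<tau> \<tau>'. 1 \<le> \<tau> \<Longrightarrow> \<tau> \<le> \<tau>' \<Longrightarrow> \<theta> \<tau>' \<le> \<theta> \<tau>"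
    and W_delta: "mono_delta W" and W_tau: "mono_tau W"
  shows "mono_tau (bellman f \<theta> tD dR W)"
  unfolding mono_tau_def
proof (intro allI impI bellman_mono_pointwise)
  fix \<tau> \<tau>' \<delta> :: nat assume h: "1 \<le> \<tau>" "\<tau> \<le> \<tau>'" "1 \<le> \<delta>"
  have W_le: "W (t, a) \<le> W (t', a)" if "1 \<le> t" "t \<le> t'" "1 \<le> a" for t t' a
    using W_tau that unfolding mono_tau_def by blast
  show "Qfun f \<theta> tD dR W (\<tau>, \<delta>) 0 \<le> Qfun f \<theta> tD dR W (\<tau>', \<delta>) 0"
    unfolding Qfun_0 using h by (simp add: W_le)
  have "\<theta> \<tau> * W (\<tau> + tD, 1) + (1 - \<theta> \<tau>) * W (\<tau> + tD, \<delta> + 1)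
        \<le> \<theta> \<tau>' * W (\<tau>' + tD, 1) + (1 - \<theta> \<tau>') * W (\<tau>' + tD, \<delta> + 1)"
    using h \<theta>[OF h(1)] \<theta>_antimono[OF h(1,2)] W_delta
    by (intro convex_combination_mono W_le) (auto simp: mono_delta_def)
  then show "Qfun f \<theta> tD dR W (\<tau>, \<delta>) 1 \<le> Qfun f \<theta> tD dR W (\<tau>', \<delta>) 1"
    unfolding Qfun_1[OF h(3)] by simp
  show "Qfun f \<theta> tD dR W (\<tau>, \<delta>) 2 \<le> Qfun f \<theta> tD dR W (\<tau>', \<delta>) 2"
    unfolding Qfun_2 by simp
qed

lemma rvi_mono_delta_tau:
  assumes f: "mono f" and \<theta>: "\<And>\<tau>. 1 \<le> \<tau> \<Longrightarrow> 0 \<le> \<theta> \<tau> \<and> \<theta> \<tau> \<le> 1"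
    and \<theta>_antimono: "\<And>\<tau> \<tau>'. 1 \<le> \<tau> \<Longrightarrow> \<tau> \<le> \<tau>' \<Longrightarrow> \<theta> \<tau>' \<le> \<theta> \<tau>"
    and "mono_delta V0" "mono_tau V0"
  shows "mono_delta (rvi f \<theta> tD dR sref V0 n) \<and> mono_tau (rvi f \<theta> tD dR sref V0 n)"
proof (induction n)
  case 0 then show ?case using assms by simp
next
  case (Suc n)
  let ?B = "bellman f \<theta> tD dR (rvi f \<theta> tD dR sref V0 n)"
  have "mono_delta ?B" "mono_tau ?B"
    using Suc bellman_mono_delta[of f \<theta>, OF f \<theta>] bellman_mono_tau[of \<theta>, OF \<theta> \<theta>_antimono]
    by blast+
  then show ?case
    unfolding rvi_Suc_bellman by (blast intro: mono_delta_diff_const mono_tau_diff_const)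
qed

text \<open>Observability, controllability and the stability condition on \<open>\<rho>(A)\<close> only serve to make
  relative value iteration converge; here the limit is assumed.\<close>

theorem proposition1:
  fixes A :: "real^'n^'n" and C :: "real^'n^'m"
    and Q Qh Pbar :: "real^'n^'n" and R :: "real^'m^'m"
    and \<theta> :: "nat \<Rightarrow> real" and \<theta>min \<theta>max :: real
    and tD dR :: nat and sref :: "nat \<times> nat"
    and V0 V :: "nat \<times> nat \<Rightarrow> real"
  assumes Q_psd: "psd Q" and R_pd: "pd R"
    and Qh: "psd Qh" "Qh ** Qh = Q"
    and obs: "observable A C" and ctrb: "controllable A Qh"
    and Pbar: "steady_state_posterior A C Q R Pbar"
    and theta_bounds: "0 \<le> \<theta>min" "\<theta>min \<le> \<theta>max" "\<theta>max \<le> 1"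
    and theta_range: "\<And>\<tau>. 1 \<le> \<tau> \<Longrightarrow> \<theta>min \<le> \<theta> \<tau> \<and> \<theta> \<tau> \<le> \<theta>max"
    and theta_mono: "\<And>\<tau> \<tau>'. 1 \<le> \<tau> \<Longrightarrow> \<tau> \<le> \<tau>' \<Longrightarrow> \<theta> \<tau>' \<le> \<theta> \<tau>"
    and tD: "1 < tD" and dR: "1 < dR"
    and rho: "(spectral_radius A)\<^sup>2 * (1 - \<theta>max) < 1"
    and sref: "1 \<le> fst sref" "1 \<le> snd sref"
    and V0_mono_delta: "\<And>\<tau> \<delta> \<delta>'. 1 \<le> \<tau> \<Longrightarrow> 1 \<le> \<delta> \<Longrightarrow> \<delta> \<le> \<delta>' \<Longrightarrow> V0 (\<tau>, \<delta>) \<le> V0 (\<tau>, \<delta>')"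
    and V0_mono_tau: "\<And>\<tau> \<tau>' \<delta>. 1 \<le> \<tau> \<Longrightarrow> \<tau> \<le> \<tau>' \<Longrightarrow> 1 \<le> \<delta> \<Longrightarrow> V0 (\<tau>, \<delta>) \<le> V0 (\<tau>', \<delta>)"
    and V_lim: "\<And>\<tau> \<delta>. 1 \<le> \<tau> \<Longrightarrow> 1 \<le> \<delta> \<Longrightarrow>
        (\<lambda>n. rvi (ferr A Pbar Q) \<theta> tD dR sref V0 n (\<tau>, \<delta>)) \<longlonglongrightarrow> V (\<tau>, \<delta>)"
  shows "(\<forall>\<tau> \<delta> \<delta>'. 1 \<le> \<tau> \<longrightarrow> 1 \<le> \<delta> \<longrightarrow> \<delta> \<le> \<delta>' \<longrightarrow> V (\<tau>, \<delta>) \<le> V (\<tau>, \<delta>'))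
       \<and> (\<forall>\<delta> \<tau> \<tau>'. 1 \<le> \<delta> \<longrightarrow> 1 \<le> \<tau> \<longrightarrow> \<tau> \<le> \<tau>' \<longrightarrow> V (\<tau>, \<delta>) \<le> V (\<tau>', \<delta>))"
proof -
  let ?V = "rvi (ferr A Pbar Q) \<theta> tD dR sref V0"
  have "mono (ferr A Pbar Q)"
    using Pbar by (intro ferr_mono[OF _ Q_psd R_pd]) (auto simp: steady_state_posterior_def)
  moreover have "\<And>\<tau>. 1 \<le> \<tau> \<Longrightarrow> 0 \<le> \<theta> \<tau> \<and> \<theta> \<tau> \<le> 1"
    using theta_range theta_bounds by force
  moreover have "mono_delta V0" "mono_tau V0"
    unfolding mono_delta_def mono_tau_def using V0_mono_delta V0_mono_tau by blast+
  ultimately have iterates: "mono_delta (?V n) \<and> mono_tau (?V n)" for n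
    using theta_mono by (intro rvi_mono_delta_tau)
  show ?thesis
  proof (intro conjI allI impI)
    fix \<tau> \<delta> \<delta>' :: nat assume "1 \<le> \<tau>" "1 \<le> \<delta>" "\<delta> \<le> \<delta>'"
    with iterates show "V (\<tau>, \<delta>) \<le> V (\<tau>, \<delta>')"
      by (intro LIMSEQ_le[OF V_lim V_lim]) (auto simp: mono_delta_def)
  next
    fix \<delta> \<tau> \<tau>' :: nat assume "1 \<le> \<delta>" "1 \<le> \<tau>" "\<tau> \<le> \<tau>'"
    with iterates show "V (\<tau>, \<delta>) \<le> V (\<tau>', \<delta>)"
      by (intro LIMSEQ_le[OF V_lim V_lim]) (auto simp: mono_tau_def)
  qed
qed

end
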